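(* Let $(\Omega,\mathcal F,\mathbb P)$ be a probability space, let $\mathfrak d,N\in\mathbb N$, $a\in\mathbb R$, $b\in(a,\infty)$, $\vartheta\in[a,b]^{\mathfrak d}$, $L,\varepsilon\in(0,\infty)$, let $\mathfrak E\colon[a,b]^{\mathfrak d}\times\Omega\to\mathbb R$ be $(\mathcal B([a,b]^{\mathfrak d})\otimes\mathcal F)/\mathcal B(\mathbb R)$-measurable with $|\mathfrak E(x,\omega)-\mathfrak E(y,\omega)|\le L\|x-y\|_\infty$ for all $x,y\in[a,b]^{\mathfrak d}$, $\omega\in\Omega$, and let $\Theta_n\colon\Omega\to[a,b]^{\mathfrak d}$, $n\in\{1,\dots,N\}$, be i.i.d. random variables with $\Theta_1$ continuous uniformly distributed on $[a,b]^{\mathfrak d}$. Then, writing $\mathfrak E(\Theta_n)$ for $\omega\mapsto\mathfrak E(\Theta_n(\omega),\omega)$, $$\mathbb P\Bigl(\bigl[\min_{n\in\{1,\dots,N\}}\mathfrak E(\Theta_n)\bigr]-\mathfrak E(\vartheta)>\varepsilon\Bigr)\le\exp\Bigl(-N\min\Bigl\{1,\frac{\varepsilon^{\mathfrak d}}{L^{\mathfrak d}(b-a)^{\mathfrak d}}\Bigr\}\Bigr).$$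
   Context: $\|\cdot\|_\infty$ is the maximum norm on $\mathbb R^{\mathfrak d}$. *)

theory Defs
  imports "HOL-Probability.Probability"
begin

definition cube :: "real \<Rightarrow> real \<Rightarrow> (real ^ 'd) set" where
  "cube a b = {x. \<forall>i. a \<le> x $ i \<and> x $ i \<le> b}"

end

theory Submission
  imports Defs
begin

text \<open>If the minimum exceeds \<open>E(\<theta>, \<omega>) + \<epsilon>\<close>, the Lipschitz bound forces every \<open>\<Theta>\<^sub>n(\<omega>)\<close>
  to avoid the box \<open>K\<close> of points of the cube within sup-distance \<open>\<epsilon>/L\<close> of \<open>\<theta>\<close>. Since
  \<open>\<theta>\<close> lies in the cube, \<open>K\<close> has side lengths at least \<open>min (\<epsilon>/L) (b - a)\<close>, so a uniform
  sample misses \<open>K\<close> with probability at most \<open>1 - p\<close> where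
  \<open>p = min 1 ((\<epsilon> / (L (b - a)))\<^sup>d)\<close>. By independence all \<open>N\<close> samples miss it with probability
  at most \<open>(1 - p)\<^sup>N \<le> exp (-N p)\<close>.\<close>

lemma cube_eq_cbox: "cube a b = cbox (\<chi> i. a) (\<chi> i. b :: real^'d)"
  by (auto simp: cube_def mem_box_cart)

lemma measure_lborel_cube:
  assumes "a \<le> b"
  shows "measure lborel (cube a b :: (real^'d) set) = (b - a) ^ CARD('d)"
proof -
  have "(\<chi> i. a) \<in> cbox (\<chi> i. a) (\<chi> i. b :: real^'d)"
    using assms by (simp add: mem_box_cart)
  then have "cbox (\<chi> i. a) (\<chi> i. b :: real^'d) \<noteq> {}"
    by blast
  then show ?thesis
    by (simp add: cube_eq_cbox content_cbox_cart)
qed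

lemma infnorm_le_cart:
  fixes x :: "real^'d"
  assumes "\<And>i. \<bar>x $ i\<bar> \<le> r"
  shows "infnorm x \<le> r"
  unfolding infnorm_cart by (rule cSup_least) (use assms in auto)

lemma measure_lborel_cbox_cart_ge:
  fixes u v :: "real^'d"
  assumes "0 \<le> m" and "\<And>i. m \<le> v $ i - u $ i"
  shows "m ^ CARD('d) \<le> measure lborel (cbox u v)"
proof -
  have "u $ i \<le> v $ i" for i
    using assms(1) assms(2)[of i] by linarith
  then have "u \<in> cbox u v"
    by (simp add: mem_box_cart)
  then have "cbox u v \<noteq> {}"
    by blast
  then have "measure lborel (cbox u v) = (\<Prod>i\<in>UNIV. v $ i - u $ i)"
    by (simp add: content_cbox_cart)
  moreover have "(\<Prod>i\<in>(UNIV::'d set). m) \<le> (\<Prod>i\<in>UNIV. v $ i - u $ i)"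
    using assms by (intro prod_mono) auto
  ultimately show ?thesis
    by simp
qed

lemma cube_contains_box_around:
  fixes \<theta> :: "real^'d"
  assumes "a \<le> b" and "\<theta> \<in> cube a b" and "0 \<le> r"
  obtains K where "K \<subseteq> cube a b" and "K \<in> sets lborel"
    and "\<And>x. x \<in> K \<Longrightarrow> infnorm (x - \<theta>) \<le> r"
    and "min r (b - a) ^ CARD('d) \<le> measure lborel K"
proof
  let ?u = "\<chi> i. max a (\<theta> $ i - r)" and ?v = "\<chi> i. min b (\<theta> $ i + r)"
  have \<theta>: "a \<le> \<theta> $ i" "\<theta> $ i \<le> b" for i
    using assms(2) by (auto simp: cube_def)
  show "cbox ?u ?v \<subseteq> cube a b"
    by (auto simp: cube_def mem_box_cart)
  show "cbox ?u ?v \<in> sets lborel"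
    by simp
  show "infnorm (x - \<theta>) \<le> r" if "x \<in> cbox ?u ?v" for x
  proof (rule infnorm_le_cart)
    fix i
    show "\<bar>(x - \<theta>) $ i\<bar> \<le> r"
      using that unfolding mem_box_cart by (auto simp: abs_le_iff dest: spec[where x = i])
  qed
  show "min r (b - a) ^ CARD('d) \<le> measure lborel (cbox ?u ?v)"
  proof (rule measure_lborel_cbox_cart_ge)
    show "0 \<le> min r (b - a)"
      using assms(1,3) by simp
    show "min r (b - a) \<le> ?v $ i - ?u $ i" for i
      using \<theta>[of i] assms(3) by (auto simp: min_def max_def)
  qed
qed

lemma Min_excess_subset_avoiding:
  fixes E :: "'x \<times> 'w \<Rightarrow> real"
  assumes "finite I"
    and "\<And>n \<omega>. n \<in> I \<Longrightarrow> \<omega> \<in> space M \<Longrightarrow> X n \<omega> \<in> Q"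
    and "\<And>x \<omega>. x \<in> K \<Longrightarrow> \<omega> \<in> space M \<Longrightarrow> E (x, \<omega>) - E (\<theta>, \<omega>) \<le> \<epsilon>"
  shows "{\<omega> \<in> space M. Min ((\<lambda>n. E (X n \<omega>, \<omega>)) ` I) - E (\<theta>, \<omega>) > \<epsilon>}
    \<subseteq> (\<Inter>n\<in>I. X n -` (Q - K) \<inter> space M)"
proof
  fix \<omega>
  assume "\<omega> \<in> {\<omega> \<in> space M. Min ((\<lambda>n. E (X n \<omega>, \<omega>)) ` I) - E (\<theta>, \<omega>) > \<epsilon>}"
  then have \<omega>: "\<omega> \<in> space M" "\<epsilon> < Min ((\<lambda>n. E (X n \<omega>, \<omega>)) ` I) - E (\<theta>, \<omega>)"
    by simp_all
  show "\<omega> \<in> (\<Inter>n\<in>I. X n -` (Q - K) \<inter> space M)"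
  proof (intro INT_I IntI vimageI2 \<omega>(1))
    fix n
    assume "n \<in> I"
    then have "Min ((\<lambda>n. E (X n \<omega>, \<omega>)) ` I) \<le> E (X n \<omega>, \<omega>)"
      using assms(1) by (intro Min_le) auto
    then have "X n \<omega> \<notin> K"
      using assms(3)[of "X n \<omega>" \<omega>] \<omega> by force
    then show "X n \<omega> \<in> Q - K"
      using assms(2) \<open>n \<in> I\<close> \<omega>(1) by blast
  qed
qed

lemma (in prob_space) prob_INT_vimage_iid:
  assumes "indep_vars (\<lambda>_. F) X I" and "finite I" and "j \<in> I"
    and "\<And>i. i \<in> I \<Longrightarrow> distr M F (X i) = distr M F (X j)"
    and "A \<in> sets F"
  shows "prob (\<Inter>i\<in>I. X i -` A \<inter> space M) = prob (X j -` A \<inter> space M) ^ card I"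
proof -
  have X: "X i \<in> measurable M F" if "i \<in> I" for i
    using assms(1) that by (simp add: indep_vars_def2)
  have "prob (X i -` A \<inter> space M) = prob (X j -` A \<inter> space M)" if "i \<in> I" for i
    using assms(4,5) X[OF that] X[OF assms(3)] that
    by (metis measure_distr)
  moreover have "prob (\<Inter>i\<in>I. X i -` A \<inter> space M) = (\<Prod>i\<in>I. prob (X i -` A \<inter> space M))"
    using assms(1-3,5) unfolding indep_vars_def2 by (intro indep_setsD) auto
  ultimately show ?thesis
    by simp
qed

lemma (in prob_space) prob_uniform_Diff:
  assumes "distr M lborel X = uniform_measure lborel Q" and "X \<in> borel_measurable M"
    and "emeasure lborel Q \<noteq> 0" and "emeasure lborel Q \<noteq> \<infinity>"
    and "Q \<in> sets borel" and "K \<in> sets borel" and "K \<subseteq> Q"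
  shows "prob (X -` (Q - K) \<inter> space M) = 1 - measure lborel K / measure lborel Q"
proof -
  have "measure lborel Q \<noteq> 0"
    using assms(3,4) by (simp add: emeasure_eq_ennreal_measure)
  moreover have "prob (X -` (Q - K) \<inter> space M) = measure (distr M lborel X) (Q - K)"
    using assms(2,5,6) by (simp add: measure_distr)
  moreover have "\<dots> = measure lborel (Q - K) / measure lborel Q"
    using assms(1,3-6) by (simp add: Int_absorb1)
  moreover have "measure lborel (Q - K) = measure lborel Q - measure lborel K"
    using assms(4-7) by (simp add: measure_Diff)
  ultimately show ?thesis
    by (simp add: diff_divide_distrib)
qed

lemma (in prob_space) prob_uniform_cube_Diff:
  fixes X :: "'a \<Rightarrow> real^'d"
  assumes "distr M lborel X = uniform_measure lborel (cube a b)" and "X \<in> borel_measurable M"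
    and "a < b" and "K \<in> sets borel" and "K \<subseteq> cube a b"
  shows "prob (X -` (cube a b - K) \<inter> space M) = 1 - measure lborel K / (b - a) ^ CARD('d)"
proof -
  have finite: "emeasure lborel (cube a b :: (real^'d) set) \<noteq> \<infinity>"
    using emeasure_lborel_cbox_finite by (simp add: cube_eq_cbox less_top)
  have volume: "measure lborel (cube a b :: (real^'d) set) = (b - a) ^ CARD('d)"
    using assms(3) by (simp add: measure_lborel_cube)
  then have "emeasure lborel (cube a b :: (real^'d) set) \<noteq> 0"
    using finite assms(3) by (simp add: emeasure_eq_ennreal_measure)
  with finite volume show ?thesis
    using assms by (subst prob_uniform_Diff) (auto simp: cube_eq_cbox)
qed

lemma one_minus_power_le_exp:
  fixes p :: real
  assumes "p \<le> 1"
  shows "(1 - p) ^ n \<le> exp (- real n * p)"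
proof -
  have "(1 - p) ^ n \<le> exp (- p) ^ n"
    using assms exp_ge_add_one_self[of "- p"] by (intro power_mono) auto
  then show ?thesis
    by (simp add: exp_of_nat_mult[symmetric])
qed

lemma min_one_power:
  fixes x :: real
  assumes "0 \<le> x"
  shows "min 1 x ^ n = min 1 (x ^ n)"
  using assms power_le_one[of x n] one_le_power[of x n] by (auto simp: min_def)

lemma min_one_power_div_le:
  fixes r c m :: real
  assumes "0 \<le> r" and "0 < c" and "min r c ^ n \<le> m"
  shows "min 1 (r ^ n / c ^ n) \<le> m / c ^ n"
proof -
  have "min 1 (r ^ n / c ^ n) = min 1 (r / c) ^ n"
    using assms(1,2) by (simp add: min_one_power power_divide)
  also have "min 1 (r / c) = min r c / c"
    using assms(2) by (simp add: min_divide_distrib_right min.commute)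
  also have "(min r c / c) ^ n = min r c ^ n / c ^ n"
    by (rule power_divide)
  also have "\<dots> \<le> m / c ^ n"
    using assms(2,3) by (simp add: divide_right_mono)
  finally show ?thesis .
qed

theorem lemma3p23:
  fixes M :: "'w measure"
    and N :: nat and a b L \<epsilon> :: real
    and \<theta>0 :: "real ^ 'd"
    and E :: "(real ^ 'd) \<times> 'w \<Rightarrow> real"
    and \<Theta> :: "nat \<Rightarrow> 'w \<Rightarrow> real ^ 'd"
  assumes "prob_space M"
    and "N \<ge> 1"
    and "a < b"
    and "\<theta>0 \<in> cube a b"
    and "L > 0" and "\<epsilon> > 0"
    and "E \<in> borel_measurable (restrict_space borel (cube a b) \<Otimes>\<^sub>M M)"
    and "\<And>x y \<omega>. x \<in> cube a b \<Longrightarrow> y \<in> cube a b \<Longrightarrow> \<omega> \<in> space M \<Longrightarrow>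
           \<bar>E (x, \<omega>) - E (y, \<omega>)\<bar> \<le> L * infnorm (x - y)"
    and "\<And>n. n \<in> {1..N} \<Longrightarrow> \<Theta> n \<in> measurable M (restrict_space borel (cube a b))"
    and "prob_space.indep_vars M (\<lambda>_. restrict_space borel (cube a b)) \<Theta> {1..N}"
    and "\<And>n. n \<in> {1..N} \<Longrightarrow>
           distr M (restrict_space borel (cube a b)) (\<Theta> n) = distr M (restrict_space borel (cube a b)) (\<Theta> 1)"
    and "distr M lborel (\<Theta> 1) = uniform_measure lborel (cube a b)"
  shows "measure M {\<omega> \<in> space M.
            Min ((\<lambda>n. E (\<Theta> n \<omega>, \<omega>)) ` {1..N}) - E (\<theta>0, \<omega>) > \<epsilon>}
         \<le> exp (- real N * min 1 (\<epsilon> ^ CARD('d) / (L ^ CARD('d) * (b - a) ^ CARD('d))))"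
proof -
  interpret prob_space M by fact
  let ?Q = "cube a b :: (real^'d) set" and ?d = "CARD('d)"
    and ?S = "{\<omega> \<in> space M. Min ((\<lambda>n. E (\<Theta> n \<omega>, \<omega>)) ` {1..N}) - E (\<theta>0, \<omega>) > \<epsilon>}"
  define p where "p = min 1 (\<epsilon> ^ ?d / (L ^ ?d * (b - a) ^ ?d))"
  obtain K where K: "K \<subseteq> ?Q" "K \<in> sets lborel" "\<And>x. x \<in> K \<Longrightarrow> infnorm (x - \<theta>0) \<le> \<epsilon> / L"
    and measure_K: "min (\<epsilon> / L) (b - a) ^ ?d \<le> measure lborel K"
    using cube_contains_box_around[of a b \<theta>0 "\<epsilon> / L"] assms(3-6) by auto
  have \<Theta>: "\<Theta> n \<in> borel_measurable M" "\<And>\<omega>. \<omega> \<in> space M \<Longrightarrow> \<Theta> n \<omega> \<in> ?Q" if "n \<in> {1..N}" for n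
    using assms(9)[OF that] by (auto simp: measurable_restrict_space2_iff)
  have Diff_K: "?Q - K \<in> sets (restrict_space borel ?Q)"
    using K(1,2) by (auto simp: sets_restrict_space_iff cube_eq_cbox)
  define T where "T = (\<Inter>n\<in>{1..N}. \<Theta> n -` (?Q - K) \<inter> space M)"
  have "E (x, \<omega>) - E (\<theta>0, \<omega>) \<le> \<epsilon>" if "x \<in> K" "\<omega> \<in> space M" for x \<omega>
    using mult_left_mono[OF K(3)[OF that(1)], of L] assms(4,5) assms(8)[of x \<theta>0 \<omega>] K(1) that
    by auto
  then have "?S \<subseteq> T"
    unfolding T_def using \<Theta>(2) by (intro Min_excess_subset_avoiding) auto
  \<comment> \<open>Only \<open>T\<close> has to be an event.\<close>
  moreover have "T \<in> events"
    unfolding T_def using assms(2)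
    by (intro sets.finite_INT measurable_sets[OF assms(9)] Diff_K) auto
  ultimately have "measure M ?S \<le> prob T"
    by (rule finite_measure_mono)
  also have "prob T = prob (\<Theta> 1 -` (?Q - K) \<inter> space M) ^ N"
    unfolding T_def using prob_INT_vimage_iid[OF assms(10) _ _ assms(11) Diff_K] assms(2) by simp
  also have "\<dots> \<le> (1 - p) ^ N"
  proof (rule power_mono)
    have "p \<le> measure lborel K / (b - a) ^ ?d"
      using min_one_power_div_le[OF _ _ measure_K] assms(3,5,6)
      by (simp add: p_def power_divide power_mult_distrib mult.commute)
    then show "prob (\<Theta> 1 -` (?Q - K) \<inter> space M) \<le> 1 - p"
      using prob_uniform_cube_Diff[OF assms(12)] \<Theta>(1) assms(2,3) K(1,2) by simp
  qed simp
  also have "\<dots> \<le> exp (- real N * p)"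
    by (rule one_minus_power_le_exp) (simp add: p_def)
  finally show ?thesis
    by (simp add: p_def)
qed

end
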